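(* In the setting below, if $\eta \geq \eta_0$, then $\tau \leq 2 + \frac{4n}{\gamma} + \frac{142\log(2/\gamma^2)}{\gamma^2}$.
   Context: Dimension $d=2$. Data $x_1,\dots,x_n\in\mathbb{R}^2$ with $\|x_i\|\le 1$, linearly separable (some $w$ has $\langle w,x_i\rangle>0$ for all $i$). $F(w) = \frac{1}{n}\sum_{i=1}^n \log(1+\exp(-\langle w, x_i\rangle))$. Maximum margin $\gamma = \max_{\|w\|=1}\min_i \langle w, x_i\rangle$. Gradient descent: $w_0=0$, $w_{t+1} = w_t - \eta\nabla F(w_t)$ with constant $\eta>0$. $\tau = \min\{t\ge 0: F(w_t)\le 1/(8\eta)\}$ ($\tau=\infty$ if no such $t$). $\eta_0 = \max(n, \frac{32}{\gamma^2}\log\frac{256}{\gamma^2})$. *)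

theory Defs
  imports "HOL-Analysis.Analysis"
begin

definition logloss :: "nat \<Rightarrow> (nat \<Rightarrow> real^2) \<Rightarrow> real^2 \<Rightarrow> real" where
  "logloss n x w = (1 / real n) * (\<Sum>i<n. ln (1 + exp (- (w \<bullet> x i))))"

text \<open>Gradient descent with w_0 = 0, using the (Frechet) gradient of the loss.\<close>
primrec gd :: "nat \<Rightarrow> (nat \<Rightarrow> real^2) \<Rightarrow> real \<Rightarrow> nat \<Rightarrow> real^2" where
  "gd n x \<eta> 0 = 0"
| "gd n x \<eta> (Suc t) = gd n x \<eta> t - \<eta> *\<^sub>R
     (\<Sum>i<n. (- 1 / (real n * (1 + exp ((gd n x \<eta> t) \<bullet> x i)))) *\<^sub>R x i)"

definition max_margin :: "nat \<Rightarrow> (nat \<Rightarrow> real^2) \<Rightarrow> real" where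
  "max_margin n x = (SUP w \<in> {w::real^2. norm w = 1}. (MIN i\<in>{..<n}. w \<bullet> x i))"

end

theory Submission
  imports Defs
begin

(*
  Write the iterates as w_k = p_k u + q_k u', where u is the maximum-margin direction and u' is
  perpendicular to it. The component p_k never decreases and is at least eta gamma / 2 after one
  step. While the risk exceeds 1/(8 eta) some margin is below ln (8 eta), which forces
  |q_k| > gamma p_k / 2; moreover |q_k| <= eta, hence p_k < 2 eta / gamma.

  As long as q keeps its sign, the points on the same side as q have exponentially small gradient
  weight, so q moves towards 0, and every unit it moves raises p by gamma units. When q does change
  sign, |q| > gamma p / 2 then shows that p grew by a factor exp (gamma^2 / 2) per step; since
  p ranges over [eta gamma / 2, 2 eta / gamma], all such phases together last at most
  (2 / gamma^2) ln (4 / gamma^2) steps. In a final phase without sign change, the opposing point of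
  least slope becomes correctly classified within O(n / gamma) steps, after which the reciprocal
  loss of the opposing points grows by gamma^2 / 5 per step, giving another O(1 / gamma^2) steps.
*)

section \<open>The logistic loss\<close>

definition logistic_loss :: "real \<Rightarrow> real" where
  "logistic_loss z = ln (1 + exp (- z))"

definition logistic_weight :: "real \<Rightarrow> real" where
  "logistic_weight z = 1 / (1 + exp z)"

lemma logistic_weight_pos: "0 < logistic_weight z"
  by (simp add: logistic_weight_def add_pos_pos)

lemma logistic_weight_le_one: "logistic_weight z \<le> 1"
  by (simp add: logistic_weight_def add_pos_pos)

lemma logistic_weight_ge_half: "z \<le> 0 \<Longrightarrow> 1 / 2 \<le> logistic_weight z"
  by (simp add: logistic_weight_def add_pos_pos divide_simps)

lemma logistic_weight_le_exp: "logistic_weight z \<le> exp (- z)"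
  by (simp add: logistic_weight_def exp_minus divide_simps add_pos_pos)

lemma logistic_weight_antimono: "z \<le> z' \<Longrightarrow> logistic_weight z' \<le> logistic_weight z"
  by (simp add: logistic_weight_def divide_simps add_pos_pos)

lemma logistic_weight_eq: "logistic_weight z = exp (- z) / (1 + exp (- z))"
  by (simp add: logistic_weight_def exp_minus divide_simps add_pos_pos)

lemma logistic_loss_pos: "0 < logistic_loss z"
  unfolding logistic_loss_def by (rule ln_gt_zero) simp

lemma logistic_loss_le_exp: "logistic_loss z \<le> exp (- z)"
  unfolding logistic_loss_def by (rule ln_add_one_self_le_self) simp

lemma logistic_loss_antimono: "z \<le> z' \<Longrightarrow> logistic_loss z' \<le> logistic_loss z"
  by (simp add: logistic_loss_def add_pos_pos)

lemma logistic_loss_le_twice_weight: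
  assumes "0 \<le> z" shows "logistic_loss z \<le> 2 * logistic_weight z"
proof -
  have "exp (- z) \<le> 1" using assms by simp
  then have "exp (- z) / 2 \<le> logistic_weight z"
    unfolding logistic_weight_eq by (intro divide_left_mono) (auto simp: add_pos_pos)
  then show ?thesis using logistic_loss_le_exp[of z] by linarith
qed

lemma has_real_derivative_logistic_loss:
  "(logistic_loss has_real_derivative - logistic_weight z) (at z)"
  unfolding logistic_loss_def[abs_def] logistic_weight_eq
  by (auto intro!: derivative_eq_intros simp: add_pos_pos)

lemma logistic_loss_diff_ge:
  assumes "0 \<le> d" shows "d * logistic_weight (z + d) \<le> logistic_loss z - logistic_loss (z + d)"
proof (cases "d = 0")
  case False
  then obtain \<xi> where \<xi>: "\<xi> < z + d"
    and eq: "logistic_loss (z + d) - logistic_loss z = (z + d - z) * - logistic_weight \<xi>"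
    using MVT2[of z "z + d" logistic_loss "\<lambda>z. - logistic_weight z"] assms
      has_real_derivative_logistic_loss by force
  have "d * logistic_weight (z + d) \<le> d * logistic_weight \<xi>"
    using \<xi> assms by (intro mult_left_mono logistic_weight_antimono) auto
  then show ?thesis using eq by simp
qed simp

lemma logistic_loss_shift_le:
  assumes "0 \<le> z" "0 \<le> d" shows "logistic_loss (z + d) * (1 + d / 2) \<le> logistic_loss z"
proof -
  have "d * logistic_loss (z + d) \<le> d * (2 * logistic_weight (z + d))"
    using assms by (intro mult_left_mono logistic_loss_le_twice_weight) auto
  with logistic_loss_diff_ge[OF assms(2), of z] show ?thesis by (simp add: algebra_simps)
qed

lemma one_minus_divide_le_ln:
  fixes x y :: real assumes "0 < x" "x \<le> y" shows "1 - x / y \<le> ln (y / x)"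
proof -
  have "ln (x / y) \<le> x / y - 1" using assms by (intro ln_le_minus_one) simp
  moreover have "ln (x / y) = - ln (y / x)" using assms by (simp add: ln_div)
  ultimately show ?thesis by linarith
qed

lemma ln_2_ge_half: "1 / 2 \<le> ln (2 :: real)"
  using one_minus_divide_le_ln[of 1 2] by simp

lemma ln_le_step_size:
  fixes \<gamma> \<eta> :: real
  assumes "0 < \<gamma>" "\<gamma> \<le> 1" "0 < \<eta>" "32 / \<gamma>^2 * ln (256 / \<gamma>^2) \<le> \<eta>"
  shows "ln (8 * \<eta>) \<le> \<eta> * \<gamma>^2 / 16"
proof -
  define s where "s = \<eta> * \<gamma>^2"
  have s: "0 < s" "32 * ln (256 / \<gamma>^2) \<le> s"
    using assms by (auto simp: s_def field_simps)
  have "ln (8 * \<eta>) = ln ((s / 32) * (256 / \<gamma>^2))"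
    using assms by (simp add: s_def field_simps)
  also have "\<dots> = ln (s / 32) + ln (256 / \<gamma>^2)"
    using s assms by (intro ln_mult_pos) auto
  also have "ln (s / 32) \<le> s / 32"
    using ln_le_minus_one[of "s / 32"] s by simp
  finally show ?thesis using s by (simp add: s_def)
qed

lemma step_size_sq_exp_le:
  fixes \<gamma> \<eta> :: real
  assumes \<gamma>: "0 < \<gamma>" "\<gamma> \<le> 1" and "0 < \<eta>" "32 / \<gamma>^2 * ln (256 / \<gamma>^2) \<le> \<eta>"
  shows "\<eta>^2 * exp (- (\<eta> * \<gamma>^2) / 2) \<le> \<gamma>^2 / 100"
proof -
  define s where "s = \<eta> * \<gamma>^2"
  have s: "0 < s" "8 * ln (256 / \<gamma>^2) \<le> s / 4"
    using assms by (auto simp: s_def field_simps)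
  have "exp (- s / 4) \<le> exp (- 8 * ln (256 / \<gamma>^2))"
    using s by simp
  also have "\<dots> = inverse (exp (ln (256 / \<gamma>^2))) ^ 8"
    by (simp add: exp_minus[symmetric] exp_of_nat_mult[symmetric] mult.commute)
  also have "\<dots> = (\<gamma>^2 / 256) ^ 8"
    using \<gamma> by simp
  finally have small: "exp (- s / 4) \<le> (\<gamma>^2 / 256) ^ 8" .
  have "s^2 / 32 \<le> exp (s / 4)"
    using exp_lower_Taylor_quadratic[of "s / 4"] s by (simp add: power_divide)
  then have bounded: "s^2 * exp (- s / 4) \<le> 32"
    by (simp add: exp_minus field_simps)
  have "\<eta>^2 * exp (- s / 2) = (s^2 * exp (- s / 4)) * exp (- s / 4) / \<gamma>^4"
    using \<gamma> by (simp add: s_def power_mult_distrib exp_add[symmetric] field_simps)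
  also have "\<dots> \<le> 32 * (\<gamma>^2 / 256) ^ 8 / \<gamma>^4"
    using bounded small by (intro divide_right_mono mult_mono) auto
  also have "\<dots> = \<gamma>^2 * (\<gamma>^10 * (32 / 256 ^ 8))"
    using \<gamma> by (simp add: power_divide field_simps)
  also have "\<dots> \<le> \<gamma>^2 * (1 * (1 / 100))"
    using \<gamma> by (intro mult_left_mono mult_mono power_le_one) auto
  finally show ?thesis by (simp add: s_def)
qed

lemma incremental_growth:
  fixes \<Phi> :: "nat \<Rightarrow> real"
  assumes "s \<le> T" "\<And>k. s \<le> k \<Longrightarrow> k < T \<Longrightarrow> \<Phi> k + 1 \<le> \<Phi> (Suc k)"
  shows "\<Phi> s + real (T - s) \<le> \<Phi> T"
  using assms by (induction T rule: dec_induct) (force simp: Suc_diff_le)+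

lemma first_failure:
  fixes P :: "nat \<Rightarrow> bool"
  assumes "P s" "\<not> (\<forall>k. s \<le> k \<and> k \<le> T \<longrightarrow> P k)"
  obtains t where "s \<le> t" "Suc t \<le> T" "\<And>k. s \<le> k \<Longrightarrow> k \<le> t \<Longrightarrow> P k" "\<not> P (Suc t)"
proof -
  define t' where "t' = (LEAST k. s \<le> k \<and> k \<le> T \<and> \<not> P k)"
  have t': "s \<le> t'" "t' \<le> T" "\<not> P t'"
    using LeastI_ex[of "\<lambda>k. s \<le> k \<and> k \<le> T \<and> \<not> P k"] assms(2) unfolding t'_def by auto
  have before: "P k" if "s \<le> k" "k < t'" for k
    using not_less_Least[of k "\<lambda>k. s \<le> k \<and> k \<le> T \<and> \<not> P k"] that t' unfolding t'_def by auto
  have "s < t'" using t' assms(1) by (cases "t' = s") auto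
  then show ?thesis using that[of "t' - 1"] t' before by auto
qed

lemma sum_le_card_lessThan_mult:
  fixes f :: "nat \<Rightarrow> real"
  assumes "A \<subseteq> {..<n}" "0 \<le> c" "\<And>i. i \<in> A \<Longrightarrow> f i \<le> c"
  shows "sum f A \<le> n * c"
proof -
  have "sum f A \<le> card A * c" using assms(3) by (rule sum_bounded_above)
  also have "\<dots> \<le> n * c"
    using assms(1,2) card_mono[OF finite_lessThan assms(1)] by (intro mult_right_mono) auto
  finally show ?thesis .
qed

section \<open>Gradient descent in margin coordinates\<close>

text \<open>Coordinates with respect to the maximum-margin direction \<open>u\<close> and its perpendicular:
  \<open>a i\<close>, \<open>b i\<close> are those of the data point \<open>x i\<close>, and \<open>p k\<close>, \<open>q k\<close> those of the iterate \<open>w\<^sub>k\<close>.\<close>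
locale logistic_gd_coords =
  fixes n :: nat and a b :: "nat \<Rightarrow> real" and \<eta> \<gamma> :: real and p q :: "nat \<Rightarrow> real"
  assumes n_ge_one: "1 \<le> n"
    and margin_le_a: "\<And>i. i < n \<Longrightarrow> \<gamma> \<le> a i"
    and norm_le_one: "\<And>i. i < n \<Longrightarrow> (a i)^2 + (b i)^2 \<le> 1"
    and \<gamma>_pos: "0 < \<gamma>" and \<gamma>_le_one: "\<gamma> \<le> 1"
    and n_le_\<eta>: "real n \<le> \<eta>"
    and \<eta>_large: "32 / \<gamma>^2 * ln (256 / \<gamma>^2) \<le> \<eta>"
    and p_0: "p 0 = 0" and q_0: "q 0 = 0"
    and p_Suc: "\<And>k. p (Suc k) = p k + \<eta> / n * (\<Sum>i<n. logistic_weight (a i * p k + b i * q k) * a i)"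
    and q_Suc: "\<And>k. q (Suc k) = q k + \<eta> / n * (\<Sum>i<n. logistic_weight (a i * p k + b i * q k) * b i)"
begin

definition margin :: "nat \<Rightarrow> nat \<Rightarrow> real" where
  "margin i k = a i * p k + b i * q k"

definition risk :: "nat \<Rightarrow> real" where
  "risk k = (\<Sum>i<n. logistic_loss (margin i k)) / n"

definition unfinished :: "nat \<Rightarrow> bool" where
  "unfinished k \<longleftrightarrow> 1 / (8 * \<eta>) < risk k"

definition eps :: real where
  "eps = exp (- (\<eta> * \<gamma>^2) / 2)"

definition Neg :: "nat set" where
  "Neg = {i. i < n \<and> b i < 0}"

definition Nonneg :: "nat set" where
  "Nonneg = {i. i < n \<and> 0 \<le> b i}"

definition q_down :: "nat \<Rightarrow> real" where
  "q_down k = \<eta> / n * (\<Sum>i\<in>Neg. logistic_weight (margin i k) * (- b i))"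

definition q_up :: "nat \<Rightarrow> real" where
  "q_up k = \<eta> / n * (\<Sum>i\<in>Nonneg. logistic_weight (margin i k) * b i)"

definition weight_Neg :: "nat \<Rightarrow> real" where
  "weight_Neg k = (\<Sum>i\<in>Neg. logistic_weight (margin i k)) / n"

definition loss_Neg :: "nat \<Rightarrow> real" where
  "loss_Neg k = (\<Sum>i\<in>Neg. logistic_loss (margin i k)) / n"

lemma mirror: "logistic_gd_coords n a (\<lambda>i. - b i) \<eta> \<gamma> p (\<lambda>k. - q k)"
proof
  show "\<And>i. i < n \<Longrightarrow> (a i)^2 + (- b i)^2 \<le> 1" using norm_le_one by simp
  show "p (Suc k) = p k + \<eta> / n * (\<Sum>i<n. logistic_weight (a i * p k + - b i * - q k) * a i)" for k
    using p_Suc by simp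
  show "- q (Suc k) = - q k + \<eta> / n * (\<Sum>i<n. logistic_weight (a i * p k + - b i * - q k) * - b i)"
    for k using q_Suc by (simp add: sum_negf)
qed (use n_ge_one margin_le_a \<gamma>_pos \<gamma>_le_one n_le_\<eta> \<eta>_large p_0 q_0 in auto)

lemma mirror_unfinished: "logistic_gd_coords.unfinished n a (\<lambda>i. - b i) \<eta> p (\<lambda>k. - q k) = unfinished"
proof -
  interpret m: logistic_gd_coords n a "\<lambda>i. - b i" \<eta> \<gamma> p "\<lambda>k. - q k" by (rule mirror)
  show ?thesis unfolding m.unfinished_def unfinished_def m.risk_def risk_def m.margin_def margin_def
    by simp
qed

lemma n_pos: "0 < real n"
  using n_ge_one by simp

lemma \<eta>_ge_one: "1 \<le> \<eta>"
  using n_ge_one n_le_\<eta> by linarith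

lemma \<eta>_pos: "0 < \<eta>"
  using \<eta>_ge_one by simp

lemma \<gamma>_sq: "0 < \<gamma>^2" "\<gamma>^2 \<le> 1"
  using \<gamma>_pos \<gamma>_le_one by (auto simp: power_le_one)

lemma ln_8\<eta>_le: "ln (8 * \<eta>) \<le> \<eta> * \<gamma>^2 / 16"
  using ln_le_step_size[OF \<gamma>_pos \<gamma>_le_one \<eta>_pos \<eta>_large] .

lemma eps_pos: "0 < eps"
  by (simp add: eps_def)

lemma \<eta>_sq_eps_le: "\<eta>^2 * eps \<le> \<gamma>^2 / 100"
  using step_size_sq_exp_le[OF \<gamma>_pos \<gamma>_le_one \<eta>_pos \<eta>_large] by (simp add: eps_def)

lemma \<eta>_eps_le: "\<eta> * eps \<le> \<gamma>^2 / 100"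
proof -
  have "\<eta> * eps \<le> \<eta> * (\<eta> * eps)"
    using mult_right_mono[OF \<eta>_ge_one, of "\<eta> * eps"] \<eta>_pos eps_pos by simp
  then show ?thesis using \<eta>_sq_eps_le by (simp add: power2_eq_square mult.assoc)
qed

lemma a_pos: "i < n \<Longrightarrow> 0 < a i"
  using margin_le_a \<gamma>_pos by force

lemma abs_b_le_one:
  assumes "i < n" shows "\<bar>b i\<bar> \<le> 1"
proof -
  have "(b i)^2 \<le> 1" using norm_le_one[OF assms] zero_le_power2[of "a i"] by linarith
  then show ?thesis using abs_le_square_iff[of "b i" 1] by simp
qed

lemma abs_inner_le_one:
  assumes "i < n" "j < n" shows "\<bar>a i * a j + b i * b j\<bar> \<le> 1"
proof -
  have "(a i * a j + b i * b j)^2 + (a i * b j - a j * b i)^2 = ((a i)^2 + (b i)^2) * ((a j)^2 + (b j)^2)"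
    by (simp add: power2_eq_square algebra_simps)
  also have "\<dots> \<le> 1 * 1"
    using norm_le_one[OF assms(1)] norm_le_one[OF assms(2)] by (intro mult_mono) auto
  finally have "(a i * a j + b i * b j)^2 + (a i * b j - a j * b i)^2 \<le> 1" by simp
  then have "(a i * a j + b i * b j)^2 \<le> 1"
    using zero_le_power2[of "a i * b j - a j * b i"] by linarith
  then show ?thesis using abs_le_square_iff[of "a i * a j + b i * b j" 1] by simp
qed

lemma \<gamma>_abs_b_le_a: "i < n \<Longrightarrow> \<gamma> * \<bar>b i\<bar> \<le> a i"
  using margin_le_a[of i] abs_b_le_one[of i] \<gamma>_pos mult_left_le[of "\<bar>b i\<bar>" \<gamma>] by linarith

lemma finite_Neg: "finite Neg" and Neg_subset: "Neg \<subseteq> {..<n}"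
  and finite_Nonneg: "finite Nonneg" and Nonneg_subset: "Nonneg \<subseteq> {..<n}"
  by (auto simp: Neg_def Nonneg_def)

lemma sum_Neg_Nonneg: "(\<Sum>i<n. f i) = (\<Sum>i\<in>Neg. f i) + (\<Sum>i\<in>Nonneg. f i)"
proof -
  have "{..<n} = Neg \<union> Nonneg" "Neg \<inter> Nonneg = {}" by (auto simp: Neg_def Nonneg_def)
  then show ?thesis using finite_Neg finite_Nonneg by (simp add: sum.union_disjoint)
qed

lemma margin_Suc:
  "margin i (Suc k) = margin i k + \<eta> / n * (\<Sum>j<n. logistic_weight (margin j k) * (a j * a i + b j * b i))"
  unfolding margin_def p_Suc q_Suc
  by (simp add: margin_def[symmetric] sum_distrib_left sum_distrib_right sum.distrib[symmetric] algebra_simps)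

lemma q_Suc_eq: "q (Suc k) = q k + q_up k - q_down k"
proof -
  have "(\<Sum>i<n. logistic_weight (margin i k) * b i)
      = (\<Sum>i\<in>Nonneg. logistic_weight (margin i k) * b i) - (\<Sum>i\<in>Neg. logistic_weight (margin i k) * (- b i))"
    using sum_Neg_Nonneg[of "\<lambda>i. logistic_weight (margin i k) * b i"] by (simp add: sum_negf)
  moreover have "q (Suc k) = q k + \<eta> / n * (\<Sum>i<n. logistic_weight (margin i k) * b i)"
    using q_Suc by (simp add: margin_def)
  ultimately show ?thesis unfolding q_up_def q_down_def by (simp add: right_diff_distrib)
qed

lemma p_le_p_Suc: "p k \<le> p (Suc k)"
proof -
  have "0 \<le> (\<Sum>i<n. logistic_weight (a i * p k + b i * q k) * a i)"
    by (intro sum_nonneg mult_nonneg_nonneg) (auto intro: less_imp_le logistic_weight_pos a_pos)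
  then show ?thesis using p_Suc[of k] \<eta>_pos n_pos by simp
qed

lemma p_mono: "k \<le> k' \<Longrightarrow> p k \<le> p k'"
  by (induction k' rule: dec_induct) (auto intro: order_trans p_le_p_Suc)

lemma p_nonneg: "0 \<le> p k"
  using p_mono[of 0 k] p_0 by simp

lemma p_1_ge: "\<eta> * \<gamma> / 2 \<le> p 1"
proof -
  have "real n * \<gamma> \<le> (\<Sum>i<n. a i)"
    using sum_mono[of "{..<n}" "\<lambda>_. \<gamma>" a] margin_le_a by simp
  then have "\<eta> / n * (real n * \<gamma> / 2) \<le> \<eta> / n * ((\<Sum>i<n. a i) / 2)"
    using \<eta>_pos n_pos by (intro mult_left_mono) auto
  then show ?thesis
    using p_Suc[of 0] n_pos by (simp add: p_0 q_0 logistic_weight_def sum_divide_distrib)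
qed

lemma p_ge: "1 \<le> k \<Longrightarrow> \<eta> * \<gamma> / 2 \<le> p k"
  using p_1_ge p_mono[of 1 k] by simp

lemma p_pos: "1 \<le> k \<Longrightarrow> 0 < p k"
  using p_ge[of k] mult_pos_pos[OF \<eta>_pos \<gamma>_pos] by linarith

lemma abs_q_1_le: "\<bar>q 1\<bar> \<le> \<eta> / 2"
proof -
  have "(\<Sum>i<n. \<bar>b i\<bar>) \<le> n"
    using sum_mono[of "{..<n}" "\<lambda>i. \<bar>b i\<bar>" "\<lambda>_. 1"] abs_b_le_one by simp
  then have "\<bar>\<Sum>i<n. b i\<bar> \<le> n"
    using sum_abs[of b "{..<n}"] by linarith
  then have "\<eta> / n * (\<bar>\<Sum>i<n. b i\<bar> / 2) \<le> \<eta> / n * (n / 2)"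
    using \<eta>_pos n_pos by (intro mult_left_mono) auto
  then show ?thesis
    using q_Suc[of 0] \<eta>_pos n_pos
    by (simp add: p_0 q_0 logistic_weight_def sum_divide_distrib[symmetric] abs_mult)
qed

lemma margin_ge_if_same_sign:
  assumes "1 \<le> k" "i < n" "0 \<le> b i * q k" shows "\<eta> * \<gamma>^2 / 2 \<le> margin i k"
proof -
  have "\<gamma> * (\<eta> * \<gamma> / 2) \<le> a i * p k"
    using p_ge[OF assms(1)] margin_le_a[OF assms(2)] \<gamma>_pos \<eta>_pos by (intro mult_mono) auto
  then show ?thesis using assms(3) by (simp add: margin_def power2_eq_square algebra_simps)
qed

lemma weight_and_loss_le_eps_if_same_sign:
  assumes "1 \<le> k" "i < n" "0 \<le> b i * q k"
  shows "logistic_weight (margin i k) \<le> eps" "logistic_loss (margin i k) \<le> eps"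
proof -
  have "exp (- margin i k) \<le> eps"
    using margin_ge_if_same_sign[OF assms] by (simp add: eps_def)
  then show "logistic_weight (margin i k) \<le> eps" "logistic_loss (margin i k) \<le> eps"
    using logistic_weight_le_exp logistic_loss_le_exp order_trans by blast+
qed

lemma unfinished_imp_small_margin:
  assumes "unfinished k" obtains i where "i < n" "margin i k < ln (8 * \<eta>)"
proof -
  have "risk k \<le> 1 / (8 * \<eta>)" if large: "\<forall>i<n. ln (8 * \<eta>) \<le> margin i k"
  proof -
    have "logistic_loss (margin i k) \<le> 1 / (8 * \<eta>)" if "i < n" for i
    proof -
      have "exp (- margin i k) \<le> exp (- ln (8 * \<eta>))" using large that by simp
      also have "\<dots> = 1 / (8 * \<eta>)" using \<eta>_pos by (simp add: exp_minus inverse_eq_divide)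
      finally show ?thesis using logistic_loss_le_exp[of "margin i k"] by linarith
    qed
    then show ?thesis
      using sum_le_card_lessThan_mult[of "{..<n}" n "1 / (8 * \<eta>)"] \<eta>_pos n_pos
      by (simp add: risk_def divide_le_eq mult.commute)
  qed
  then show ?thesis using assms that by (force simp: unfinished_def not_le)
qed

lemma unfinished_imp_abs_q_gt:
  assumes "1 \<le> k" "unfinished k" shows "\<gamma> * p k / 2 < \<bar>q k\<bar>"
proof (rule ccontr)
  assume "\<not> \<gamma> * p k / 2 < \<bar>q k\<bar>"
  then have q_small: "\<bar>q k\<bar> \<le> \<gamma> * p k / 2" by simp
  obtain i where i: "i < n" "margin i k < ln (8 * \<eta>)"
    using unfinished_imp_small_margin[OF assms(2)] .
  have "\<bar>b i * q k\<bar> \<le> 1 * (\<gamma> * p k / 2)"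
    unfolding abs_mult using abs_b_le_one[OF i(1)] q_small by (intro mult_mono) auto
  moreover have "\<gamma> * p k \<le> a i * p k"
    using margin_le_a[OF i(1)] p_nonneg by (intro mult_right_mono) auto
  moreover have "\<gamma> * (\<eta> * \<gamma> / 2) \<le> \<gamma> * p k"
    using p_ge[OF assms(1)] \<gamma>_pos by (intro mult_left_mono) auto
  ultimately have "\<eta> * \<gamma>^2 / 4 \<le> margin i k"
    by (simp add: margin_def power2_eq_square algebra_simps)
  moreover have "0 \<le> \<eta> * \<gamma>^2" using \<eta>_pos by simp
  ultimately show False using i(2) ln_8\<eta>_le by linarith
qed

lemma unfinished_imp_q_nonzero: "1 \<le> k \<Longrightarrow> unfinished k \<Longrightarrow> q k \<noteq> 0"
  using unfinished_imp_abs_q_gt[of k] mult_nonneg_nonneg[OF less_imp_le[OF \<gamma>_pos] p_nonneg[of k]]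
  by fastforce

lemma small_margin_in_Neg:
  assumes "1 \<le> k" "0 < q k" "i < n" "margin i k < ln (8 * \<eta>)" shows "i \<in> Neg"
proof (rule ccontr)
  assume "i \<notin> Neg"
  then have "\<eta> * \<gamma>^2 / 2 \<le> margin i k"
    using assms by (intro margin_ge_if_same_sign) (auto simp: Neg_def)
  moreover have "0 \<le> \<eta> * \<gamma>^2" using \<eta>_pos by simp
  ultimately show False using ln_8\<eta>_le assms(4) by linarith
qed

lemma q_up_nonneg: "0 \<le> q_up k"
  unfolding q_up_def using \<eta>_pos n_pos
  by (intro mult_nonneg_nonneg sum_nonneg) (auto intro: less_imp_le logistic_weight_pos simp: Nonneg_def)

lemma q_up_le:
  assumes "1 \<le> k" "0 < q k" shows "q_up k \<le> \<eta> * eps"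
proof -
  have "logistic_weight (margin i k) * b i \<le> eps" if "i \<in> Nonneg" for i
  proof -
    have "logistic_weight (margin i k) * b i \<le> eps * 1"
      using that assms weight_and_loss_le_eps_if_same_sign(1)[OF assms(1)] abs_b_le_one[of i] eps_pos
      by (intro mult_mono) (auto simp: Nonneg_def)
    then show ?thesis by simp
  qed
  then have "(\<Sum>i\<in>Nonneg. logistic_weight (margin i k) * b i) \<le> n * eps"
    using Nonneg_subset eps_pos by (intro sum_le_card_lessThan_mult) auto
  then show ?thesis unfolding q_up_def using \<eta>_pos n_pos by (simp add: field_simps mult_left_mono)
qed

lemma q_down_le: "q_down k \<le> \<eta>"
proof -
  have "logistic_weight (margin i k) * (- b i) \<le> 1" if "i \<in> Neg" for i
    using that logistic_weight_le_one[of "margin i k"] logistic_weight_pos[of "margin i k"]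
      abs_b_le_one[of i] mult_mono[of "logistic_weight (margin i k)" 1 "- b i" 1]
    by (auto simp: Neg_def)
  then have "(\<Sum>i\<in>Neg. logistic_weight (margin i k) * (- b i)) \<le> real n * 1"
    using Neg_subset by (intro sum_le_card_lessThan_mult) auto
  then show ?thesis unfolding q_down_def using \<eta>_pos n_pos by (simp add: field_simps mult_left_mono)
qed

lemma \<gamma>_q_down_le_p_Suc: "\<gamma> * q_down k \<le> p (Suc k) - p k"
proof -
  have "\<gamma> * (\<Sum>i\<in>Neg. logistic_weight (margin i k) * (- b i))
      = (\<Sum>i\<in>Neg. logistic_weight (margin i k) * (\<gamma> * \<bar>b i\<bar>))"
    by (simp add: sum_distrib_left Neg_def algebra_simps)
  also have "\<dots> \<le> (\<Sum>i\<in>Neg. logistic_weight (margin i k) * a i)"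
    by (intro sum_mono mult_left_mono \<gamma>_abs_b_le_a)
      (auto intro: less_imp_le logistic_weight_pos simp: Neg_def)
  also have "\<dots> \<le> (\<Sum>i<n. logistic_weight (margin i k) * a i)"
    using Neg_subset by (intro sum_mono2)
      (auto intro!: mult_nonneg_nonneg less_imp_le[OF logistic_weight_pos] less_imp_le[OF a_pos])
  finally have "\<eta> / n * (\<gamma> * (\<Sum>i\<in>Neg. logistic_weight (margin i k) * (- b i)))
      \<le> \<eta> / n * (\<Sum>i<n. logistic_weight (margin i k) * a i)"
    using \<eta>_pos n_pos by (intro mult_left_mono) auto
  then show ?thesis unfolding q_down_def using p_Suc[of k] by (simp add: margin_def algebra_simps)
qed

text \<open>Some point of \<open>Neg\<close> has margin below \<open>ln (8 \<eta>)\<close>; this forces \<open>- b i > \<gamma>\<^sup>2/4\<close> and a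
  gradient weight of at least \<open>1 / (9 \<eta>)\<close>.\<close>
lemma q_down_ge:
  assumes "1 \<le> k" "0 < q k" "q k \<le> \<eta>" "unfinished k" shows "\<gamma>^2 / (36 * n) \<le> q_down k"
proof -
  obtain i where i: "i < n" "margin i k < ln (8 * \<eta>)"
    using unfinished_imp_small_margin[OF assms(4)] .
  have i_Neg: "i \<in> Neg" using small_margin_in_Neg[OF assms(1,2) i] .
  have "\<gamma> * (\<eta> * \<gamma> / 2) \<le> \<gamma> * p k"
    using p_ge[OF assms(1)] \<gamma>_pos by (intro mult_left_mono) auto
  then have \<gamma>p: "\<eta> * \<gamma>^2 / 2 \<le> \<gamma> * p k" by (simp add: power2_eq_square algebra_simps)
  have "\<gamma> * p k \<le> a i * p k"
    using margin_le_a[OF i(1)] p_nonneg by (intro mult_right_mono) auto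
  moreover have "0 \<le> \<eta> * \<gamma>^2" using \<eta>_pos by simp
  ultimately have "\<gamma> * p k / 2 < (- b i) * q k"
    using i(2) ln_8\<eta>_le \<gamma>p by (simp add: margin_def)
  also have "\<dots> \<le> (- b i) * \<eta>"
    using assms(3) i_Neg by (intro mult_left_mono) (auto simp: Neg_def)
  finally have "\<eta> * (\<gamma>^2 / 4) < \<eta> * (- b i)" using \<gamma>p by (simp add: algebra_simps)
  then have b_i: "\<gamma>^2 / 4 < - b i" using \<eta>_pos mult_less_cancel_left_pos by blast
  have "1 / (9 * \<eta>) \<le> 1 / (1 + exp (ln (8 * \<eta>)))"
    using \<eta>_ge_one by (simp add: field_simps)
  also have "\<dots> \<le> logistic_weight (margin i k)"
    using logistic_weight_antimono[of "margin i k" "ln (8 * \<eta>)"] i(2)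
    by (simp add: logistic_weight_def)
  finally have "1 / (9 * \<eta>) * (\<gamma>^2 / 4) \<le> logistic_weight (margin i k) * (- b i)"
    using b_i \<eta>_pos \<gamma>_sq logistic_weight_pos[of "margin i k"] by (intro mult_mono) auto
  also have "\<dots> \<le> (\<Sum>j\<in>Neg. logistic_weight (margin j k) * (- b j))"
    using i_Neg finite_Neg
    by (intro member_le_sum) (auto simp: Neg_def intro!: mult_nonneg_nonpos less_imp_le[OF logistic_weight_pos])
  finally have "\<eta> / n * (1 / (9 * \<eta>) * (\<gamma>^2 / 4)) \<le> q_down k"
    unfolding q_down_def using \<eta>_pos n_pos by (intro mult_left_mono) auto
  then show ?thesis using \<eta>_pos by (simp add: field_simps)
qed

lemma q_up_le_q_down:
  assumes "1 \<le> k" "0 < q k" "q k \<le> \<eta>" "unfinished k" shows "q_up k \<le> q_down k"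
proof -
  have "\<eta> * eps * \<eta> \<le> \<gamma>^2 / 100"
    using \<eta>_sq_eps_le by (simp add: power2_eq_square algebra_simps)
  then have "\<eta> * eps \<le> \<gamma>^2 / (100 * \<eta>)" using \<eta>_pos by (simp add: field_simps)
  also have "\<dots> \<le> \<gamma>^2 / (36 * n)"
    using n_le_\<eta> n_pos \<gamma>_sq by (intro divide_left_mono) auto
  finally show ?thesis using q_up_le[OF assms(1,2)] q_down_ge[OF assms] by linarith
qed

lemma abs_q_Suc_le_if_pos:
  assumes "1 \<le> k" "0 < q k" "q k \<le> \<eta>" "unfinished k" shows "\<bar>q (Suc k)\<bar> \<le> \<eta>"
  using q_Suc_eq[of k] q_up_le_q_down[OF assms] q_up_nonneg[of k] q_down_le[of k] assms(2,3)
  by linarith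

lemma abs_q_le:
  assumes "1 \<le> k" "\<And>j. 1 \<le> j \<Longrightarrow> j < k \<Longrightarrow> unfinished j" shows "\<bar>q k\<bar> \<le> \<eta>"
  using assms
proof (induction k rule: dec_induct)
  case base
  then show ?case using abs_q_1_le \<eta>_pos by simp
next
  case (step k)
  interpret m: logistic_gd_coords n a "\<lambda>i. - b i" \<eta> \<gamma> p "\<lambda>k. - q k" by (rule mirror)
  have k: "1 \<le> k" "unfinished k" "\<bar>q k\<bar> \<le> \<eta>" using step by auto
  show ?case
  proof (cases "0 < q k")
    case True
    then show ?thesis using abs_q_Suc_le_if_pos k by simp
  next
    case False
    then have "0 < - q k" using unfinished_imp_q_nonzero[OF k(1,2)] by linarith
    then show ?thesis using m.abs_q_Suc_le_if_pos[OF k(1)] k mirror_unfinished by simp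
  qed
qed

lemma unfinished_imp_p_lt:
  assumes "1 \<le> k" "unfinished k" "\<bar>q k\<bar> \<le> \<eta>" shows "p k < 2 * \<eta> / \<gamma>"
proof -
  have "\<gamma> * p k < 2 * \<eta>" using unfinished_imp_abs_q_gt[OF assms(1,2)] assms(3) by linarith
  then show ?thesis using \<gamma>_pos by (simp add: field_simps)
qed

lemma risk_le_loss_Neg:
  assumes "1 \<le> k" "0 < q k" shows "risk k \<le> loss_Neg k + eps"
proof -
  have "(\<Sum>i\<in>Nonneg. logistic_loss (margin i k)) \<le> n * eps"
    using Nonneg_subset eps_pos weight_and_loss_le_eps_if_same_sign(2)[OF assms(1)] assms(2)
    by (intro sum_le_card_lessThan_mult) (auto simp: Nonneg_def)
  then have "(\<Sum>i\<in>Nonneg. logistic_loss (margin i k)) / n \<le> eps"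
    using n_pos by (simp add: divide_le_eq mult.commute)
  then show ?thesis
    unfolding risk_def loss_Neg_def sum_Neg_Nonneg[of "\<lambda>i. logistic_loss (margin i k)"]
    by (simp add: add_divide_distrib)
qed

lemma loss_Neg_gt:
  assumes "1 \<le> k" "0 < q k" "unfinished k" shows "1 / (8 * \<eta>) - eps < loss_Neg k"
  using risk_le_loss_Neg[OF assms(1,2)] assms(3) unfolding unfinished_def by linarith

lemma weight_Neg_ge_half:
  assumes "i \<in> Neg" "margin i k \<le> 0" shows "1 / (2 * n) \<le> weight_Neg k"
proof -
  have "logistic_weight (margin i k) \<le> (\<Sum>j\<in>Neg. logistic_weight (margin j k))"
    using assms(1) finite_Neg by (intro member_le_sum) (auto intro: less_imp_le[OF logistic_weight_pos])
  then show ?thesis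
    unfolding weight_Neg_def using logistic_weight_ge_half[OF assms(2)] n_pos by (simp add: field_simps)
qed

lemma loss_Neg_le_twice_weight_Neg:
  assumes "\<And>i. i \<in> Neg \<Longrightarrow> 0 \<le> margin i k" shows "loss_Neg k \<le> 2 * weight_Neg k"
proof -
  have "(\<Sum>i\<in>Neg. logistic_loss (margin i k)) \<le> (\<Sum>i\<in>Neg. 2 * logistic_weight (margin i k))"
    by (intro sum_mono logistic_loss_le_twice_weight assms)
  then have "(\<Sum>i\<in>Neg. logistic_loss (margin i k)) \<le> 2 * (\<Sum>i\<in>Neg. logistic_weight (margin i k))"
    by (simp add: sum_distrib_left)
  then show ?thesis
    unfolding weight_Neg_def loss_Neg_def using n_pos by (simp add: divide_right_mono)
qed

text \<open>Any two points of \<open>Neg\<close> have inner product at least \<open>\<gamma>\<^sup>2\<close>, while the points of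
  \<open>Nonneg\<close> carry gradient weight at most \<open>eps\<close>.\<close>
lemma margin_Suc_ge:
  assumes "1 \<le> k" "0 < q k" "i \<in> Neg"
  shows "margin i k + \<eta> * \<gamma>^2 * weight_Neg k - \<eta> * eps \<le> margin i (Suc k)"
proof -
  have i: "i < n" "b i < 0" using assms(3) by (auto simp: Neg_def)
  define c where "c j = a j * a i + b j * b i" for j
  have "\<gamma>^2 * logistic_weight (margin j k) \<le> logistic_weight (margin j k) * c j" if "j \<in> Neg" for j
  proof -
    have "\<gamma> * \<gamma> \<le> a j * a i"
      using margin_le_a[of j] margin_le_a[OF i(1)] \<gamma>_pos that by (intro mult_mono) (auto simp: Neg_def)
    moreover have "0 \<le> b j * b i" using i that by (auto simp: Neg_def zero_le_mult_iff)
    ultimately show ?thesis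
      using logistic_weight_pos[of "margin j k"] by (simp add: c_def power2_eq_square mult.commute mult_left_mono)
  qed
  then have "\<gamma>^2 * (\<Sum>j\<in>Neg. logistic_weight (margin j k)) \<le> (\<Sum>j\<in>Neg. logistic_weight (margin j k) * c j)"
    unfolding sum_distrib_left by (rule sum_mono)
  moreover have "n * weight_Neg k = (\<Sum>j\<in>Neg. logistic_weight (margin j k))"
    unfolding weight_Neg_def using n_pos by simp
  ultimately have Neg_part: "\<gamma>^2 * (n * weight_Neg k) \<le> (\<Sum>j\<in>Neg. logistic_weight (margin j k) * c j)"
    by simp
  have "- (logistic_weight (margin j k) * c j) \<le> eps" if "j \<in> Nonneg" for j
  proof -
    have "\<bar>logistic_weight (margin j k) * c j\<bar> \<le> eps * 1"
      unfolding abs_mult c_def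
      using that assms(2) weight_and_loss_le_eps_if_same_sign(1)[OF assms(1)] abs_inner_le_one[OF _ i(1)]
        logistic_weight_pos[of "margin j k"] eps_pos
      by (intro mult_mono) (auto simp: Nonneg_def)
    then show ?thesis by linarith
  qed
  then have "(\<Sum>j\<in>Nonneg. - (logistic_weight (margin j k) * c j)) \<le> n * eps"
    using Nonneg_subset eps_pos by (intro sum_le_card_lessThan_mult) auto
  then have "\<gamma>^2 * (n * weight_Neg k) - n * eps \<le> (\<Sum>j<n. logistic_weight (margin j k) * c j)"
    using Neg_part sum_Neg_Nonneg[of "\<lambda>j. logistic_weight (margin j k) * c j"] by (simp add: sum_negf)
  then have "\<eta> / n * (\<gamma>^2 * (n * weight_Neg k) - n * eps) \<le> \<eta> / n * (\<Sum>j<n. logistic_weight (margin j k) * c j)"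
    using \<eta>_pos n_pos by (intro mult_left_mono) auto
  moreover have "\<eta> / n * (\<gamma>^2 * (n * weight_Neg k) - n * eps) = \<eta> * \<gamma>^2 * weight_Neg k - \<eta> * eps"
    using n_pos by (simp add: field_simps)
  ultimately show ?thesis using margin_Suc[of i k] unfolding c_def by linarith
qed

lemma \<eta>_eps_lt_weight_Neg:
  assumes "1 \<le> k" "0 < q k" "unfinished k" shows "\<eta> * eps < \<eta> * \<gamma>^2 * weight_Neg k"
proof (cases "\<exists>i\<in>Neg. margin i k \<le> 0")
  case True
  then obtain i where "i \<in> Neg" "margin i k \<le> 0" by blast
  then have "\<eta> * \<gamma>^2 * (1 / (2 * n)) \<le> \<eta> * \<gamma>^2 * weight_Neg k"
    using \<eta>_pos \<gamma>_sq by (intro mult_left_mono weight_Neg_ge_half) auto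
  moreover have "\<gamma>^2 / 2 \<le> \<eta> * \<gamma>^2 * (1 / (2 * n))"
    using n_le_\<eta> n_pos \<gamma>_sq by (simp add: field_simps mult_right_mono)
  ultimately show ?thesis using \<eta>_eps_le \<gamma>_sq by linarith
next
  case False
  then have "loss_Neg k \<le> 2 * weight_Neg k" by (intro loss_Neg_le_twice_weight_Neg) force
  then have "1 / (16 * \<eta>) - eps / 2 < weight_Neg k"
    using loss_Neg_gt[OF assms] by (simp add: field_simps)
  then have "\<eta> * \<gamma>^2 * (1 / (16 * \<eta>) - eps / 2) < \<eta> * \<gamma>^2 * weight_Neg k"
    using \<eta>_pos \<gamma>_sq by (intro mult_strict_left_mono) auto
  moreover have "\<eta> * \<gamma>^2 * (1 / (16 * \<eta>) - eps / 2) = \<gamma>^2 / 16 - \<gamma>^2 * (\<eta> * eps) / 2"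
    using \<eta>_pos by (simp add: field_simps)
  moreover have "\<gamma>^2 * (\<eta> * eps) \<le> 1 * (\<gamma>^2 / 100)"
    using \<eta>_eps_le \<gamma>_sq \<eta>_pos eps_pos by (intro mult_mono) auto
  ultimately show ?thesis using \<eta>_eps_le \<gamma>_sq by linarith
qed

lemma margin_Neg_lt_Suc:
  assumes "1 \<le> k" "0 < q k" "unfinished k" "i \<in> Neg" shows "margin i k < margin i (Suc k)"
  using margin_Suc_ge[OF assms(1,2,4)] \<eta>_eps_lt_weight_Neg[OF assms(1-3)] by linarith

section \<open>Phases in which \<open>q\<close> keeps its sign\<close>

lemma margin_Neg_mono:
  assumes "1 \<le> s" "s \<le> k" "k \<le> t" "i \<in> Neg"
    and "\<And>j. s \<le> j \<Longrightarrow> j < t \<Longrightarrow> 0 < q j \<and> unfinished j"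
  shows "margin i k \<le> margin i t"
  using assms(3,2)
proof (induction t rule: dec_induct)
  case (step j)
  then have "margin i j < margin i (Suc j)"
    using assms by (intro margin_Neg_lt_Suc) auto
  then show ?case using step by simp
qed simp

lemma q_down_antimono:
  assumes "1 \<le> s" "s \<le> k" "k \<le> t"
    and "\<And>j. s \<le> j \<Longrightarrow> j < t \<Longrightarrow> 0 < q j \<and> unfinished j"
  shows "q_down t \<le> q_down k"
proof -
  have "(\<Sum>i\<in>Neg. logistic_weight (margin i t) * (- b i)) \<le> (\<Sum>i\<in>Neg. logistic_weight (margin i k) * (- b i))"
    using assms
    by (intro sum_mono mult_right_mono logistic_weight_antimono margin_Neg_mono) (auto simp: Neg_def)
  then show ?thesis unfolding q_down_def using \<eta>_pos n_pos by (intro mult_left_mono) auto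
qed

lemma ln_p_growth_before_flip:
  assumes "1 \<le> s" "s \<le> t" "\<And>k. s \<le> k \<Longrightarrow> k \<le> t \<Longrightarrow> 0 < q k" "q (Suc t) < 0"
    and unf: "\<And>k. s \<le> k \<Longrightarrow> k \<le> Suc t \<Longrightarrow> unfinished k"
  shows "real (Suc t - s) * \<gamma>^2 / 2 \<le> ln (p (Suc t) / p s)"
proof -
  have down: "q_down t \<le> q_down k" if "s \<le> k" "k \<le> t" for k
    using assms that by (intro q_down_antimono) auto
  have "(\<Sum>k = s..t. \<gamma> * q_down t) \<le> (\<Sum>k = s..t. p (Suc k) - p k)"
  proof (intro sum_mono)
    fix k assume "k \<in> {s..t}"
    then have "\<gamma> * q_down t \<le> \<gamma> * q_down k" using down \<gamma>_pos by (intro mult_left_mono) auto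
    then show "\<gamma> * q_down t \<le> p (Suc k) - p k" using \<gamma>_q_down_le_p_Suc[of k] by linarith
  qed
  also have "\<dots> = p (Suc t) - p s"
    using assms(2) by (intro sum_Suc_diff) simp
  finally have growth: "real (Suc t - s) * (\<gamma> * q_down t) \<le> p (Suc t) - p s"
    using assms(2) by simp
  have "- q (Suc t) \<le> q_down t"
    using q_Suc_eq[of t] assms(2,3) q_up_nonneg[of t] by force
  moreover have "\<gamma> * p (Suc t) / 2 < \<bar>q (Suc t)\<bar>"
    using assms(1,2) unf[of "Suc t"] by (intro unfinished_imp_abs_q_gt) auto
  ultimately have "\<gamma> * (\<gamma> * p (Suc t) / 2) \<le> \<gamma> * q_down t"
    using assms(4) \<gamma>_pos by (intro mult_left_mono) auto
  then have "real (Suc t - s) * (\<gamma>^2 / 2 * p (Suc t)) \<le> real (Suc t - s) * (\<gamma> * q_down t)"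
    by (intro mult_left_mono) (auto simp: power2_eq_square)
  with growth have "real (Suc t - s) * (\<gamma>^2 / 2 * p (Suc t)) \<le> p (Suc t) - p s"
    by linarith
  moreover have "0 < p s" "p s \<le> p (Suc t)"
    using assms(1,2) by (auto intro: p_pos p_mono)
  ultimately have "real (Suc t - s) * \<gamma>^2 / 2 \<le> 1 - p s / p (Suc t)"
    by (simp add: field_simps)
  also have "\<dots> \<le> ln (p (Suc t) / p s)"
    using \<open>0 < p s\<close> \<open>p s \<le> p (Suc t)\<close> by (rule one_minus_divide_le_ln)
  finally show ?thesis .
qed

definition scaled_margin :: "nat \<Rightarrow> nat \<Rightarrow> real" where
  "scaled_margin i k = margin i k / (- b i)"

lemma scaled_margin_eq: "i \<in> Neg \<Longrightarrow> scaled_margin i k = a i / (- b i) * p k - q k"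
  by (simp add: scaled_margin_def margin_def Neg_def field_simps)

lemma scaled_margin_le:
  assumes "e \<in> Neg" "i \<in> Neg" "a e / (- b e) \<le> a i / (- b i)"
  shows "scaled_margin e k \<le> scaled_margin i k"
  using assms mult_right_mono[OF assms(3) p_nonneg] by (simp add: scaled_margin_eq)

lemma Neg_nonempty:
  assumes "1 \<le> k" "0 < q k" "unfinished k" shows "Neg \<noteq> {}"
  using unfinished_imp_small_margin[OF assms(3)] small_margin_in_Neg[OF assms(1,2)] by blast

lemma scaled_margin_le_Suc:
  assumes "e \<in> Neg" "1 \<le> k" "0 < q k" "q k \<le> \<eta>" "unfinished k"
  shows "scaled_margin e k \<le> scaled_margin e (Suc k)"
proof -
  have "0 < a e" "0 < - b e" using assms(1) a_pos by (auto simp: Neg_def)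
  then have "0 \<le> a e / (- b e)" by (intro divide_nonneg_pos) auto
  then have "a e / (- b e) * p k \<le> a e / (- b e) * p (Suc k)"
    by (rule mult_left_mono[OF p_le_p_Suc])
  then show ?thesis
    using assms q_Suc_eq[of k] q_up_le_q_down[OF assms(2-5)] by (simp add: scaled_margin_eq)
qed

text \<open>As long as the point \<open>e\<close> is misclassified its weight is at least \<open>1/2\<close>, and by AM-GM
  \<open>a e\<^sup>2 / (- b e) + (- b e) \<ge> 2 a e \<ge> 2 \<gamma>\<close>.\<close>
lemma scaled_margin_Suc_ge:
  assumes "e \<in> Neg" "1 \<le> k" "0 < q k" "margin e k \<le> 0"
  shows "scaled_margin e k + \<eta> * \<gamma> / (2 * n) \<le> scaled_margin e (Suc k)"
proof -
  define \<beta> where "\<beta> = - b e"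
  define \<kappa> where "\<kappa> = a e / \<beta>"
  have e: "e < n" "0 < \<beta>" using assms(1) by (auto simp: Neg_def \<beta>_def)
  have \<kappa>: "0 < \<kappa>" "a e = \<kappa> * \<beta>" using a_pos[OF e(1)] e by (auto simp: \<kappa>_def)
  define w where "w = logistic_weight (margin e k)"
  have w: "1 / 2 \<le> w" using logistic_weight_ge_half[OF assms(4)] by (simp add: w_def)
  have "\<eta> / n * (w * a e) \<le> \<eta> / n * (\<Sum>i<n. logistic_weight (margin i k) * a i)"
    unfolding w_def using e \<eta>_pos n_pos
    by (intro mult_left_mono member_le_sum)
      (auto intro!: mult_nonneg_nonneg less_imp_le[OF logistic_weight_pos] less_imp_le[OF a_pos])
  then have dp: "\<eta> / n * (w * a e) \<le> p (Suc k) - p k"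
    using p_Suc[of k] by (simp add: margin_def)
  have "\<eta> / n * (w * \<beta>) \<le> q_down k"
    unfolding q_down_def \<beta>_def w_def using assms(1) finite_Neg \<eta>_pos n_pos
    by (intro mult_left_mono member_le_sum)
      (auto simp: Neg_def intro!: mult_nonneg_nonpos less_imp_le[OF logistic_weight_pos])
  moreover have "2 * \<gamma> \<le> \<kappa> * a e + \<beta>"
  proof -
    have "2 * \<kappa> \<le> \<kappa> * \<kappa> + 1"
      using zero_le_power2[of "\<kappa> - 1"] by (simp add: power2_eq_square algebra_simps)
    then have "2 * \<kappa> * \<beta> \<le> (\<kappa> * \<kappa> + 1) * \<beta>"
      using e(2) by (intro mult_right_mono) auto
    then have "2 * a e \<le> \<kappa> * a e + \<beta>"
      using \<kappa>(2) by (simp add: algebra_simps)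
    then show ?thesis using margin_le_a[OF e(1)] by linarith
  qed
  then have "\<eta> / n * (1 / 2 * (2 * \<gamma>)) \<le> \<eta> / n * (w * (\<kappa> * a e + \<beta>))"
    using w \<eta>_pos n_pos \<gamma>_pos by (intro mult_left_mono mult_mono) auto
  ultimately have "\<eta> * \<gamma> / n \<le> \<kappa> * (p (Suc k) - p k) + q_down k"
    using dp \<kappa>(1) mult_left_mono[OF dp, of \<kappa>] by (simp add: algebra_simps)
  moreover have "q_up k \<le> \<eta> * \<gamma> / (2 * n)"
  proof -
    have "\<gamma>^2 \<le> \<gamma>" using \<gamma>_le_one \<gamma>_pos by (simp add: power2_eq_square mult_left_le)
    then have "\<eta> * eps \<le> \<gamma> / 2" using \<eta>_eps_le \<gamma>_pos by linarith
    also have "\<dots> \<le> \<eta> * \<gamma> / (2 * n)"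
      using n_le_\<eta> n_pos \<gamma>_pos by (simp add: field_simps mult_right_mono)
    finally show ?thesis using q_up_le[OF assms(2,3)] by linarith
  qed
  ultimately show ?thesis
    using q_Suc_eq[of k] assms(1) by (simp add: scaled_margin_eq \<kappa>_def \<beta>_def algebra_simps)
qed

lemma loss_Neg_Suc_le:
  assumes "1 \<le> k" "0 < q k" "unfinished k" shows "loss_Neg (Suc k) \<le> loss_Neg k"
proof -
  have "(\<Sum>i\<in>Neg. logistic_loss (margin i (Suc k))) \<le> (\<Sum>i\<in>Neg. logistic_loss (margin i k))"
    using assms by (intro sum_mono logistic_loss_antimono less_imp_le[OF margin_Neg_lt_Suc])
  then show ?thesis unfolding loss_Neg_def using n_pos by (simp add: divide_right_mono)
qed

lemma \<eta>_loss_Neg_gt: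
  assumes "1 \<le> k" "0 < q k" "unfinished k" shows "1 / 9 < \<eta> * loss_Neg k"
proof -
  have "\<eta> * (1 / (8 * \<eta>) - eps) < \<eta> * loss_Neg k"
    using loss_Neg_gt[OF assms] \<eta>_pos by (intro mult_strict_left_mono) auto
  moreover have "\<eta> * (1 / (8 * \<eta>) - eps) = 1 / 8 - \<eta> * eps"
    using \<eta>_pos by (simp add: field_simps)
  ultimately show ?thesis using \<eta>_eps_le \<gamma>_sq by linarith
qed

lemma loss_Neg_pos: "Neg \<noteq> {} \<Longrightarrow> 0 < loss_Neg k"
  unfolding loss_Neg_def using finite_Neg n_pos
  by (intro divide_pos_pos sum_pos logistic_loss_pos) auto

text \<open>The gradient step shrinks the losses of \<open>Neg\<close> by a factor \<open>1 + \<Theta>(\<gamma>\<^sup>2 \<eta> loss_Neg)\<close>,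
  so the reciprocal of \<open>loss_Neg\<close> grows linearly.\<close>
lemma inverse_loss_Neg_Suc_ge:
  assumes "1 \<le> k" "0 < q k" "unfinished k" "\<And>i. i \<in> Neg \<Longrightarrow> 0 \<le> margin i k"
  shows "1 / (\<eta> * loss_Neg k) + \<gamma>^2 / 5 \<le> 1 / (\<eta> * loss_Neg (Suc k))"
proof -
  define y where "y k = \<eta> * loss_Neg k" for k
  define D where "D = \<eta> * \<gamma>^2 * weight_Neg k - \<eta> * eps"
  have y: "1 / 9 < y k" "0 < y (Suc k)"
    using \<eta>_loss_Neg_gt[OF assms(1-3)] loss_Neg_pos[OF Neg_nonempty[OF assms(1-3)]] \<eta>_pos
    by (auto simp: y_def)
  have D: "0 \<le> D" using \<eta>_eps_lt_weight_Neg[OF assms(1-3)] by (simp add: D_def)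
  have "\<gamma>^2 * y k / 2 - \<eta> * eps \<le> D"
    using loss_Neg_le_twice_weight_Neg[OF assms(4)] \<eta>_pos \<gamma>_sq
      mult_left_mono[of "loss_Neg k" "2 * weight_Neg k" "\<eta> * \<gamma>^2"]
    by (simp add: D_def y_def algebra_simps)
  then have "(\<gamma>^2 * y k / 2 - \<eta> * eps) / (2 * y k) \<le> D / (2 * y k)"
    using y by (intro divide_right_mono) auto
  moreover have "(\<gamma>^2 * y k / 2 - \<eta> * eps) / (2 * y k) = \<gamma>^2 / 4 - \<eta> * eps / (2 * y k)"
    using y by (simp add: field_simps)
  ultimately have "\<gamma>^2 / 4 - \<eta> * eps / (2 * y k) \<le> D / (2 * y k)" by simp
  moreover have "\<eta> * eps / (2 * y k) \<le> \<gamma>^2 / 20"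
  proof -
    have "\<gamma>^2 / 100 \<le> \<gamma>^2 / 20 * (2 * y k)" using y \<gamma>_sq by (simp add: field_simps)
    then show ?thesis using \<eta>_eps_le y by (simp add: field_simps)
  qed
  ultimately have "1 / y k + \<gamma>^2 / 5 \<le> (1 + D / 2) / y k"
    using y by (simp add: add_divide_distrib)
  moreover have "y (Suc k) * (1 + D / 2) \<le> y k"
  proof -
    have "logistic_loss (margin i (Suc k)) * (1 + D / 2) \<le> logistic_loss (margin i k)" if "i \<in> Neg" for i
    proof -
      have "margin i k + D \<le> margin i (Suc k)"
        using margin_Suc_ge[OF assms(1,2) that] by (simp add: D_def)
      then have "logistic_loss (margin i (Suc k)) * (1 + D / 2) \<le> logistic_loss (margin i k + D) * (1 + D / 2)"
        using D by (intro mult_right_mono logistic_loss_antimono) auto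
      also have "\<dots> \<le> logistic_loss (margin i k)"
        using assms(4)[OF that] D by (rule logistic_loss_shift_le)
      finally show ?thesis .
    qed
    then have "(\<Sum>i\<in>Neg. logistic_loss (margin i (Suc k))) * (1 + D / 2) \<le> (\<Sum>i\<in>Neg. logistic_loss (margin i k))"
      unfolding sum_distrib_right by (rule sum_mono)
    then show ?thesis
      unfolding y_def loss_Neg_def using \<eta>_pos n_pos
      by (simp add: divide_right_mono mult_left_mono mult.assoc[symmetric] mult.commute[of _ "1 + D / 2"])
  qed
  then have "(1 + D / 2) / y k \<le> 1 / y (Suc k)"
    using y by (simp add: field_simps)
  ultimately show ?thesis by (simp add: y_def)
qed

text \<open>While the point \<open>e\<close> is misclassified its scaled margin grows by \<open>\<eta> \<gamma> / (2 n)\<close> per step;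
  if \<open>e\<close> has the least slope \<open>a e / (- b e)\<close>, afterwards all of \<open>Neg\<close> is classified correctly and
  \<open>1 / (\<eta> loss_Neg)\<close> grows by \<open>\<gamma>\<^sup>2 / 5\<close> per step. The potential combines both counts, each capped
  at the value beyond which its phase cannot continue.\<close>
definition potential :: "nat \<Rightarrow> nat \<Rightarrow> real" where
  "potential e k = min (scaled_margin e k * (2 * real n / (\<eta> * \<gamma>))) 1
    + min (5 / (\<gamma>^2 * (\<eta> * loss_Neg k))) (45 / \<gamma>^2 + 1)"

lemma potential_Suc_ge:
  assumes e: "e \<in> Neg" "\<And>i. i \<in> Neg \<Longrightarrow> scaled_margin e k \<le> scaled_margin i k"
    and k: "1 \<le> k" "0 < q k" "q k \<le> \<eta>" "unfinished k" "0 < q (Suc k)" "unfinished (Suc k)"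
  shows "potential e k + 1 \<le> potential e (Suc k)"
proof -
  define c where "c = 2 * real n / (\<eta> * \<gamma>)"
  have c: "0 < c" using n_pos \<eta>_pos \<gamma>_pos by (simp add: c_def)
  define y where "y k = \<eta> * loss_Neg k" for k
  have y: "1 / 9 < y k" "1 / 9 < y (Suc k)"
    using \<eta>_loss_Neg_gt[OF k(1,2,4)] \<eta>_loss_Neg_gt[of "Suc k"] k by (auto simp: y_def)
  have "y (Suc k) \<le> y k"
    using loss_Neg_Suc_le[OF k(1,2,4)] \<eta>_pos by (simp add: y_def)
  then have y_mono: "5 / (\<gamma>^2 * y k) \<le> 5 / (\<gamma>^2 * y (Suc k))"
    using y \<gamma>_sq by (intro divide_left_mono mult_left_mono mult_pos_pos) auto
  show ?thesis
  proof (cases "scaled_margin e k \<le> 0")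
    case True
    then have "margin e k \<le> 0"
      using e(1) by (auto simp: scaled_margin_def Neg_def zero_le_divide_iff)
    then have "(scaled_margin e k + \<eta> * \<gamma> / (2 * n)) * c \<le> scaled_margin e (Suc k) * c"
      using scaled_margin_Suc_ge[OF e(1) k(1,2)] c by (intro mult_right_mono) auto
    moreover have "(scaled_margin e k + \<eta> * \<gamma> / (2 * n)) * c = scaled_margin e k * c + 1"
      unfolding c_def using \<eta>_pos \<gamma>_pos n_pos by (simp add: field_simps)
    moreover have "scaled_margin e k * c \<le> 0" using True c by (simp add: mult_nonpos_nonneg)
    ultimately show ?thesis using y_mono unfolding potential_def c_def[symmetric] y_def by linarith
  next
    case False
    have "0 \<le> margin i k" if "i \<in> Neg" for i
    proof -
      have "0 < scaled_margin i k" using False e(2)[OF that] by linarith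
      then show ?thesis using that by (auto simp: scaled_margin_def Neg_def divide_less_0_iff)
    qed
    then have "1 / y k + \<gamma>^2 / 5 \<le> 1 / y (Suc k)"
      using inverse_loss_Neg_Suc_ge[OF k(1,2,4)] by (simp add: y_def)
    then have "5 / \<gamma>^2 * (1 / y k + \<gamma>^2 / 5) \<le> 5 / \<gamma>^2 * (1 / y (Suc k))"
      using \<gamma>_sq by (intro mult_left_mono) auto
    then have "5 / (\<gamma>^2 * y k) + 1 \<le> 5 / (\<gamma>^2 * y (Suc k))"
      using \<gamma>_sq y by (simp add: field_simps)
    moreover have "5 / (\<gamma>^2 * y k) < 45 / \<gamma>^2"
      using y \<gamma>_sq by (simp add: field_simps)
    moreover have "scaled_margin e k * c \<le> scaled_margin e (Suc k) * c"
      using scaled_margin_le_Suc[OF e(1) k(1-4)] c by (intro mult_right_mono) auto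
    ultimately show ?thesis unfolding potential_def c_def[symmetric] y_def by linarith
  qed
qed

lemma potential_ge:
  assumes "e \<in> Neg" "q k \<le> \<eta>" shows "- (2 * real n / \<gamma>) \<le> potential e k"
proof -
  have "0 < a e" "0 < - b e" using assms(1) a_pos by (auto simp: Neg_def)
  then have "0 \<le> a e / (- b e) * p k"
    by (meson divide_nonneg_pos less_imp_le mult_nonneg_nonneg p_nonneg)
  then have "- \<eta> \<le> scaled_margin e k"
    using assms by (simp add: scaled_margin_eq)
  then have "- \<eta> * (2 * real n / (\<eta> * \<gamma>)) \<le> scaled_margin e k * (2 * real n / (\<eta> * \<gamma>))"
    using \<eta>_pos \<gamma>_pos by (intro mult_right_mono) auto
  moreover have "- \<eta> * (2 * real n / (\<eta> * \<gamma>)) = - (2 * real n / \<gamma>)"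
    using \<eta>_pos by simp
  moreover have "0 \<le> 2 * real n / \<gamma>" "0 \<le> 45 / \<gamma>^2" using \<gamma>_pos by simp_all
  moreover have "0 \<le> 5 / (\<gamma>^2 * (\<eta> * loss_Neg k))"
  proof -
    have "0 < loss_Neg k" using loss_Neg_pos assms(1) by blast
    then show ?thesis using \<eta>_pos \<gamma>_sq by simp
  qed
  ultimately show ?thesis unfolding potential_def by linarith
qed

lemma final_phase_length:
  assumes "1 \<le> s" "s \<le> T"
    and run: "\<And>k. s \<le> k \<Longrightarrow> k \<le> T \<Longrightarrow> 0 < q k \<and> q k \<le> \<eta> \<and> unfinished k"
  shows "real (T - s) \<le> 2 + 2 * real n / \<gamma> + 45 / \<gamma>^2"
proof -
  have Neg: "Neg \<noteq> {}" using Neg_nonempty assms by blast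
  define e where "e = arg_min_on (\<lambda>i. a i / (- b i)) Neg"
  have e_Neg: "e \<in> Neg"
    unfolding e_def by (rule arg_min_if_finite(1)[OF finite_Neg Neg])
  have "a e / (- b e) \<le> a i / (- b i)" if "i \<in> Neg" for i
    using arg_min_least[OF finite_Neg Neg that, of "\<lambda>i. a i / (- b i)"] by (simp add: e_def)
  then have e_least: "\<And>i. i \<in> Neg \<Longrightarrow> scaled_margin e k \<le> scaled_margin i k" for k
    using e_Neg by (auto intro: scaled_margin_le)
  have "potential e k + 1 \<le> potential e (Suc k)" if "s \<le> k" "k < T" for k
    using that assms(1) run[of k] run[of "Suc k"] by (intro potential_Suc_ge e_Neg e_least) auto
  then have "potential e s + real (T - s) \<le> potential e T"
    using incremental_growth[OF assms(2)] by blast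
  moreover have "- (2 * real n / \<gamma>) \<le> potential e s"
    using e_Neg run[of s] assms(2) by (intro potential_ge) auto
  moreover have "potential e T \<le> 1 + (45 / \<gamma>^2 + 1)" unfolding potential_def by linarith
  ultimately show ?thesis by linarith
qed

section \<open>Counting the steps\<close>

definition final_phase_bound :: real where
  "final_phase_bound = 2 + 2 * real n / \<gamma> + 45 / \<gamma>^2"

definition step_budget :: "nat \<Rightarrow> real" where
  "step_budget s = 2 / \<gamma>^2 * ln (2 * \<eta> / (\<gamma> * p s)) + final_phase_bound"

lemma ln_p_bound_nonneg:
  assumes "1 \<le> k" "\<And>j. j \<le> k \<Longrightarrow> unfinished j" shows "0 \<le> ln (2 * \<eta> / (\<gamma> * p k))"
proof -
  have "\<bar>q k\<bar> \<le> \<eta>" using assms by (intro abs_q_le) auto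
  then have "p k < 2 * \<eta> / \<gamma>" using assms by (intro unfinished_imp_p_lt) auto
  then have "1 \<le> 2 * \<eta> / (\<gamma> * p k)"
    using p_pos[OF assms(1)] \<gamma>_pos by (simp add: field_simps)
  then show ?thesis by simp
qed

text \<open>The induction step of the next lemma, for \<open>q s > 0\<close>: either \<open>q\<close> stays positive up to
  \<open>T\<close> (the final phase), or it first becomes nonpositive at some \<open>t + 1\<close>, and \<open>p\<close> has grown enough
  in between to pay for the steps from \<open>s\<close> to \<open>t + 1\<close>.\<close>
lemma steps_after_bound_step:
  assumes "1 \<le> s" "s \<le> T" "0 < q s" and unf: "\<And>k. k \<le> T \<Longrightarrow> unfinished k"
    and IH: "\<And>s'. s < s' \<Longrightarrow> s' \<le> T \<Longrightarrow> real (T - s') \<le> step_budget s'"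
  shows "real (T - s) \<le> step_budget s"
proof (cases "\<forall>k. s \<le> k \<and> k \<le> T \<longrightarrow> 0 < q k")
  case True
  have "0 < q k \<and> q k \<le> \<eta> \<and> unfinished k" if "s \<le> k" "k \<le> T" for k
  proof -
    have "\<bar>q k\<bar> \<le> \<eta>" using assms(1) that unf by (intro abs_q_le) auto
    then show ?thesis using True that unf by auto
  qed
  then have "real (T - s) \<le> final_phase_bound"
    unfolding final_phase_bound_def using final_phase_length[OF assms(1,2)] by blast
  moreover have "0 \<le> 2 / \<gamma>^2 * ln (2 * \<eta> / (\<gamma> * p s))"
    using ln_p_bound_nonneg[of s] assms \<gamma>_sq by simp
  ultimately show ?thesis unfolding step_budget_def by linarith
next
  case False
  then obtain t where t: "s \<le> t" "Suc t \<le> T" "\<And>k. s \<le> k \<Longrightarrow> k \<le> t \<Longrightarrow> 0 < q k"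
    "\<not> 0 < q (Suc t)"
    using first_failure[of "\<lambda>k. 0 < q k" s T] assms(3) by blast
  have "q (Suc t) \<noteq> 0" using unfinished_imp_q_nonzero[of "Suc t"] unf t(2) by simp
  then have "q (Suc t) < 0" using t(4) by simp
  then have "real (Suc t - s) * \<gamma>^2 / 2 \<le> ln (p (Suc t) / p s)"
    using assms(1) t unf by (intro ln_p_growth_before_flip) auto
  then have "real (Suc t - s) \<le> 2 / \<gamma>^2 * ln (p (Suc t) / p s)"
    using \<gamma>_sq by (simp add: field_simps)
  moreover have "real (T - Suc t) \<le> step_budget (Suc t)"
    using IH[of "Suc t"] t(1,2) by linarith
  moreover have "ln (p (Suc t) / p s) + ln (2 * \<eta> / (\<gamma> * p (Suc t))) = ln (2 * \<eta> / (\<gamma> * p s))"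
    using p_pos[of s] p_pos[of "Suc t"] assms(1) \<eta>_pos \<gamma>_pos by (simp add: ln_div ln_mult)
  then have "2 / \<gamma>^2 * ln (p (Suc t) / p s) + 2 / \<gamma>^2 * ln (2 * \<eta> / (\<gamma> * p (Suc t)))
      = 2 / \<gamma>^2 * ln (2 * \<eta> / (\<gamma> * p s))"
    by (metis distrib_left)
  moreover have "real (T - s) = real (Suc t - s) + real (T - Suc t)" using t by simp
  ultimately show ?thesis unfolding step_budget_def by linarith
qed

lemma steps_after_bound:
  assumes "\<And>k. k \<le> T \<Longrightarrow> unfinished k" "1 \<le> s" "s \<le> T"
  shows "real (T - s) \<le> step_budget s"
  using assms(2,3)
proof (induction "T - s" arbitrary: s rule: less_induct)
  case less
  have IH: "real (T - s') \<le> step_budget s'" if "s < s'" "s' \<le> T" for s'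
  proof -
    have "T - s' < T - s" "1 \<le> s'" using that less.prems by auto
    then show ?thesis using less.hyps that(2) by blast
  qed
  show ?case
  proof (cases "0 < q s")
    case True
    then show ?thesis using steps_after_bound_step[OF less.prems True assms(1) IH] by blast
  next
    case False
    interpret m: logistic_gd_coords n a "\<lambda>i. - b i" \<eta> \<gamma> p "\<lambda>k. - q k" by (rule mirror)
    have "0 < - q s" using False unfinished_imp_q_nonzero less.prems assms(1) by force
    moreover have "m.unfinished k" if "k \<le> T" for k
      using assms(1)[OF that] mirror_unfinished by simp
    ultimately show ?thesis
      using m.steps_after_bound_step[OF less.prems] IH by blast
  qed
qed

lemma unfinished_steps_bound:
  assumes "\<And>k. k \<le> T \<Longrightarrow> unfinished k" "1 \<le> T"
  shows "real T \<le> 1 + 2 / \<gamma>^2 * ln (4 / \<gamma>^2) + final_phase_bound"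
proof -
  have "2 * \<eta> / (\<gamma> * p 1) \<le> 2 * \<eta> / (\<gamma> * (\<eta> * \<gamma> / 2))"
    using p_1_ge p_pos[of 1] \<eta>_pos \<gamma>_pos by (intro divide_left_mono mult_left_mono mult_pos_pos) auto
  also have "\<dots> = 4 / \<gamma>^2" using \<eta>_pos \<gamma>_pos by (simp add: field_simps power2_eq_square)
  finally have "ln (2 * \<eta> / (\<gamma> * p 1)) \<le> ln (4 / \<gamma>^2)"
    using p_pos[of 1] \<eta>_pos \<gamma>_pos by simp
  then have "2 / \<gamma>^2 * ln (2 * \<eta> / (\<gamma> * p 1)) \<le> 2 / \<gamma>^2 * ln (4 / \<gamma>^2)"
    using \<gamma>_sq by (intro mult_left_mono) auto
  then show ?thesis
    using steps_after_bound[OF assms(1) order_refl assms(2)] assms(2) by (simp add: step_budget_def)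
qed

lemma step_bound_arith:
  "1 + 2 / \<gamma>^2 * ln (4 / \<gamma>^2) + final_phase_bound
    \<le> 1 + 4 * real n / \<gamma> + 142 * ln (2 / \<gamma>^2) / \<gamma>^2"
proof -
  define L where "L = ln (2 / \<gamma>^2)"
  have "ln 2 \<le> L" unfolding L_def using \<gamma>_sq by (subst ln_le_cancel_iff) (auto simp: field_simps)
  then have L: "1 / 2 \<le> L" using ln_2_ge_half by linarith
  have "ln (4 / \<gamma>^2) = ln 2 + L"
    unfolding L_def using \<gamma>_sq ln_mult[of 2 "2 / \<gamma>^2"] by simp
  then have "2 / \<gamma>^2 * ln (4 / \<gamma>^2) + 45 / \<gamma>^2 = (2 * ln 2 + 2 * L + 45) / \<gamma>^2"
    by (simp add: add_divide_distrib algebra_simps)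
  also have "\<dots> \<le> 142 * L / \<gamma>^2"
    using ln_2_less_1 L \<gamma>_sq by (intro divide_right_mono) auto
  finally have "2 / \<gamma>^2 * ln (4 / \<gamma>^2) + 45 / \<gamma>^2 \<le> 142 * L / \<gamma>^2" .
  moreover have "2 \<le> 2 * real n / \<gamma>"
    using n_ge_one \<gamma>_pos \<gamma>_le_one by (simp add: field_simps)
  ultimately show ?thesis unfolding L_def final_phase_bound_def by simp
qed

theorem exists_small_risk:
  "\<exists>t. real t \<le> 2 + 4 * real n / \<gamma> + 142 * ln (2 / \<gamma>^2) / \<gamma>^2 \<and> risk t \<le> 1 / (8 * \<eta>)"
proof (rule ccontr)
  define B where "B = 2 + 4 * real n / \<gamma> + 142 * ln (2 / \<gamma>^2) / \<gamma>^2"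
  assume contra: "\<not> ?thesis"
  have unf: "unfinished k" if "real k \<le> B" for k
    using contra that unfolding unfinished_def B_def by (meson not_le)
  have "1 \<le> 2 / \<gamma>^2" using \<gamma>_sq by (simp add: field_simps)
  then have "2 \<le> B" unfolding B_def using \<gamma>_pos by simp
  then have B: "real (nat \<lfloor>B\<rfloor>) \<le> B" "B < real (nat \<lfloor>B\<rfloor>) + 1" "1 \<le> nat \<lfloor>B\<rfloor>"
    by linarith+
  have "real (nat \<lfloor>B\<rfloor>) \<le> 1 + 2 / \<gamma>^2 * ln (4 / \<gamma>^2) + final_phase_bound"
    using B by (intro unfinished_steps_bound unf) auto
  then show False using B step_bound_arith unfolding B_def by linarith
qed

end

section \<open>From the data to margin coordinates\<close>

lemma continuous_on_MIN:
  fixes f :: "'i \<Rightarrow> 'a::topological_space \<Rightarrow> 'b::linorder_topology"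
  assumes "finite I" "I \<noteq> {}" "\<And>i. i \<in> I \<Longrightarrow> continuous_on S (f i)"
  shows "continuous_on S (\<lambda>x. MIN i\<in>I. f i x)"
  using assms
proof (induction I rule: finite_ne_induct)
  case (insert i I)
  then show ?case by (simp add: Min_insert continuous_on_min)
qed simp

lemma max_margin_attained:
  fixes x :: "nat \<Rightarrow> real^2"
  assumes "1 \<le> n"
  obtains u where "norm u = 1" "\<And>i. i < n \<Longrightarrow> max_margin n x \<le> u \<bullet> x i"
    and "\<And>w. norm w = 1 \<Longrightarrow> (MIN i\<in>{..<n}. w \<bullet> x i) \<le> max_margin n x"
proof -
  define h where "h w = (MIN i\<in>{..<n}. w \<bullet> x i)" for w :: "real^2"
  have sphere: "{w::real^2. norm w = 1} = sphere 0 1" by auto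
  have "continuous_on (sphere 0 1) h"
    unfolding h_def using assms by (intro continuous_on_MIN continuous_intros) (auto simp: lessThan_empty_iff)
  moreover have "sphere (0::real^2) 1 \<noteq> {}" by simp
  ultimately obtain u where u: "u \<in> sphere 0 1" "\<And>w. w \<in> sphere 0 1 \<Longrightarrow> h w \<le> h u"
    using continuous_attains_sup[OF compact_sphere] by blast
  have max: "max_margin n x = h u"
    unfolding max_margin_def h_def[symmetric] sphere using u by (intro cSup_eq_maximum) auto
  show ?thesis
  proof (rule that)
    show "norm u = 1" using u(1) by simp
    show "max_margin n x \<le> u \<bullet> x i" if "i < n" for i
      unfolding max h_def using that by (intro Min_le) auto
    show "(MIN i\<in>{..<n}. w \<bullet> x i) \<le> max_margin n x" if "norm w = 1" for w
      using u(2)[of w] that unfolding max h_def by simp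
  qed
qed

lemma max_margin_pos:
  fixes x :: "nat \<Rightarrow> real^2"
  assumes "1 \<le> n" "\<exists>w. \<forall>i<n. w \<bullet> x i > 0" shows "0 < max_margin n x"
proof -
  obtain w where w: "\<forall>i<n. w \<bullet> x i > 0" using assms(2) by blast
  then have "w \<noteq> 0" using assms(1) by fastforce
  then have "0 < (MIN i\<in>{..<n}. (w /\<^sub>R norm w) \<bullet> x i)"
    using w assms(1) by (subst Min_gr_iff) (auto simp: lessThan_empty_iff)
  moreover obtain u where "\<And>w. norm w = 1 \<Longrightarrow> (MIN i\<in>{..<n}. w \<bullet> x i) \<le> max_margin n x"
    using max_margin_attained[OF assms(1)] by blast
  moreover have "norm (w /\<^sub>R norm w) = 1" using \<open>w \<noteq> 0\<close> by simp
  ultimately show ?thesis by (meson less_le_trans)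
qed

lemma max_margin_le_one:
  fixes x :: "nat \<Rightarrow> real^2"
  assumes "1 \<le> n" "\<And>i. i < n \<Longrightarrow> norm (x i) \<le> 1" shows "max_margin n x \<le> 1"
proof -
  obtain u where u: "norm u = 1" "\<And>i. i < n \<Longrightarrow> max_margin n x \<le> u \<bullet> x i"
    using max_margin_attained[OF assms(1)] by blast
  have "u \<bullet> x 0 \<le> norm u * norm (x 0)" by (rule norm_cauchy_schwarz)
  then show ?thesis using u assms(2)[of 0] assms(1) by force
qed

definition perp :: "real^2 \<Rightarrow> real^2" where
  "perp u = (\<chi> j. if j = 1 then - (u $ 2) else u $ 1)"

lemma inner_eq_coords_perp:
  fixes u v w :: "real^2" assumes "norm u = 1"
  shows "v \<bullet> w = (v \<bullet> u) * (w \<bullet> u) + (v \<bullet> perp u) * (w \<bullet> perp u)"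
proof -
  have unit: "(u $ 1)^2 + (u $ 2)^2 = 1"
    using assms by (simp add: norm_eq_sqrt_inner inner_vec_def sum_2 power2_eq_square)
  have "(v \<bullet> u) * (w \<bullet> u) + (v \<bullet> perp u) * (w \<bullet> perp u)
      = (v $ 1 * w $ 1 + v $ 2 * w $ 2) * ((u $ 1)^2 + (u $ 2)^2)"
    by (simp add: inner_vec_def sum_2 perp_def power2_eq_square algebra_simps)
  also have "\<dots> = v \<bullet> w" using unit by (simp add: inner_vec_def sum_2)
  finally show ?thesis ..
qed

lemma inner_gd_Suc:
  "gd n x \<eta> (Suc k) \<bullet> v
    = gd n x \<eta> k \<bullet> v + \<eta> / n * (\<Sum>i<n. logistic_weight (gd n x \<eta> k \<bullet> x i) * (x i \<bullet> v))"
proof -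
  have "(\<Sum>i<n. (- 1 / (real n * (1 + exp (gd n x \<eta> k \<bullet> x i)))) * (x i \<bullet> v))
      = - (1 / n) * (\<Sum>i<n. logistic_weight (gd n x \<eta> k \<bullet> x i) * (x i \<bullet> v))"
    unfolding sum_distrib_left logistic_weight_def by (intro sum.cong) auto
  then show ?thesis by (simp add: inner_diff_left inner_sum_left)
qed

lemma logistic_gd_coords_gd:
  fixes x :: "nat \<Rightarrow> real^2"
  assumes "1 \<le> n" "\<And>i. i < n \<Longrightarrow> norm (x i) \<le> 1"
    and "norm u = 1" "\<And>i. i < n \<Longrightarrow> \<gamma> \<le> u \<bullet> x i" "0 < \<gamma>" "\<gamma> \<le> 1"
    and "real n \<le> \<eta>" "32 / \<gamma>^2 * ln (256 / \<gamma>^2) \<le> \<eta>"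
  shows "logistic_gd_coords n (\<lambda>i. x i \<bullet> u) (\<lambda>i. x i \<bullet> perp u) \<eta> \<gamma>
    (\<lambda>k. gd n x \<eta> k \<bullet> u) (\<lambda>k. gd n x \<eta> k \<bullet> perp u)"
proof
  have coords: "v \<bullet> w = (v \<bullet> u) * (w \<bullet> u) + (v \<bullet> perp u) * (w \<bullet> perp u)" for v w
    using inner_eq_coords_perp[OF assms(3)] .
  have margin_coords:
    "gd n x \<eta> k \<bullet> x i = (x i \<bullet> u) * (gd n x \<eta> k \<bullet> u) + (x i \<bullet> perp u) * (gd n x \<eta> k \<bullet> perp u)" for k i
    using coords[of "gd n x \<eta> k" "x i"] by (simp add: mult.commute)
  show "(x i \<bullet> u)^2 + (x i \<bullet> perp u)^2 \<le> 1" if "i < n" for i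
  proof -
    have "x i \<bullet> x i \<le> 1" using assms(2)[OF that] by (simp add: dot_square_norm power_le_one)
    then show ?thesis using coords[of "x i" "x i"] by (simp add: power2_eq_square)
  qed
  show "gd n x \<eta> (Suc k) \<bullet> u = gd n x \<eta> k \<bullet> u + \<eta> / n * (\<Sum>i<n. logistic_weight
      ((x i \<bullet> u) * (gd n x \<eta> k \<bullet> u) + (x i \<bullet> perp u) * (gd n x \<eta> k \<bullet> perp u)) * (x i \<bullet> u))"
    and "gd n x \<eta> (Suc k) \<bullet> perp u = gd n x \<eta> k \<bullet> perp u + \<eta> / n * (\<Sum>i<n. logistic_weight
      ((x i \<bullet> u) * (gd n x \<eta> k \<bullet> u) + (x i \<bullet> perp u) * (gd n x \<eta> k \<bullet> perp u)) * (x i \<bullet> perp u))"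
    for k
    unfolding inner_gd_Suc margin_coords by simp_all
qed (use assms in \<open>auto simp: inner_commute\<close>)

theorem lemma9:
  fixes n :: nat and x :: "nat \<Rightarrow> real^2" and \<eta> :: real
  assumes "n \<ge> 1"
    and "\<And>i. i < n \<Longrightarrow> norm (x i) \<le> 1"
    and "\<exists>w. \<forall>i<n. w \<bullet> x i > 0"
    and "\<eta> \<ge> max (real n) (32 / (max_margin n x)\<^sup>2 * ln (256 / (max_margin n x)\<^sup>2))"
  shows "\<exists>t. logloss n x (gd n x \<eta> t) \<le> 1 / (8 * \<eta>) \<and>
         real (LEAST t. logloss n x (gd n x \<eta> t) \<le> 1 / (8 * \<eta>))
           \<le> 2 + 4 * real n / max_margin n x
               + 142 * ln (2 / (max_margin n x)\<^sup>2) / (max_margin n x)\<^sup>2"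
proof -
  obtain u where u: "norm u = 1" "\<And>i. i < n \<Longrightarrow> max_margin n x \<le> u \<bullet> x i"
    using max_margin_attained[OF assms(1)] by blast
  interpret d: logistic_gd_coords n "\<lambda>i. x i \<bullet> u" "\<lambda>i. x i \<bullet> perp u" \<eta> "max_margin n x"
    "\<lambda>k. gd n x \<eta> k \<bullet> u" "\<lambda>k. gd n x \<eta> k \<bullet> perp u"
    using assms u max_margin_pos max_margin_le_one by (intro logistic_gd_coords_gd) auto
  have "gd n x \<eta> k \<bullet> x i = d.margin i k" for k i
    using inner_eq_coords_perp[OF u(1), of "gd n x \<eta> k" "x i"] by (simp add: d.margin_def mult.commute)
  then have risk: "logloss n x (gd n x \<eta> k) = d.risk k" for k
    by (simp add: logloss_def d.risk_def logistic_loss_def)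
  obtain t where t: "real t \<le> 2 + 4 * real n / max_margin n x
      + 142 * ln (2 / (max_margin n x)^2) / (max_margin n x)^2" "d.risk t \<le> 1 / (8 * \<eta>)"
    using d.exists_small_risk by blast
  then have "(LEAST t. logloss n x (gd n x \<eta> t) \<le> 1 / (8 * \<eta>)) \<le> t"
    by (intro Least_le) (simp add: risk)
  then show ?thesis using t risk by fastforce
qed

end
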